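(* Fix integers $d\ge 2$, $k\ge 1$, a configuration $\omega\in\{0,1\}^{\mathbb{E}_{d,k}}$ and a set $A\subset[d]_\star$. Then the sets $\mathrm{prog}(e)$, $e\in\sigma(A)$, are pairwise disjoint. If moreover there exists $w\in[d]_\star$ such that $A\subset\{w\cdot v: v\in\bigcup_{n=0}^{k}[d]^n\}$, then: (i) for every long edge $e=\langle u,u\cdot r\rangle$ (with $r\in[d]^k$) such that $u\in\pi(A)$ and $u\cdot r\notin\pi(A)$, there exists a unique $e'\in\mathrm{trace}(e)\cap\sigma(A)$; (ii) $\Pi(A)$ is the disjoint union of $\pi(A)$ and the sets $\Pi(A)\cap\mathrm{prog}(e)$ for $e\in\sigma(A)$.
   Context: $[d]=\{1,\dots,d\}$, $[d]_\star=\bigcup_{n\ge0}[d]^n$ (finite sequences, $[d]^0=\{o\}$), with concatenation $u\cdot v$. The oriented graph $\mathbb{T}_{d,k}$ has vertex set $[d]_\star$ and edge set $\mathbb{E}_{d,k}=\mathbb{E}^{s}_{d,k}\cup\mathbb{E}^{\ell}_{d,k}$, where short edges are $\mathbb{E}^s_{d,k}=\{\langle u,u\cdot a\rangle:u\in[d]_\star,a\in[d]\}$ and long edges are $\mathbb{E}^\ell_{d,k}=\{\langle u,u\cdot r\rangle:u\in[d]_\star,r\in[d]^k\}$. An edge is open if $\omega$ equals 1 on it. The progeny of a vertex $u$ is $\mathrm{prog}(u)=\{u\cdot v:v\in[d]_\star\}$; for an edge $e=\langle u,v\rangle$, $\mathrm{prog}(e)=\mathrm{prog}(v)$. For a long edge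 $e=\langle u,u\cdot r\rangle$ with $r=(r_1,\dots,r_k)$, $\mathrm{trace}(e)$ is the set of $k$ short edges $\langle u,u\cdot r_1\rangle,\langle u\cdot r_1,u\cdot(r_1,r_2)\rangle,\dots,\langle u\cdot(r_1,\dots,r_{k-1}),u\cdot r\rangle$. $\Pi(A)$ is the set of vertices reachable from some vertex of $A$ by an oriented path of open edges (short or long; the empty path allowed, so $A\subseteq\Pi(A)$), and $\pi(A)$ is the set of vertices reachable from $A$ by an oriented path of open short edges only. A short edge $\langle u,v\rangle$ is a hub for $A$ if $\mathrm{prog}(v)\cap\pi(A)=\varnothing$ and $\mathrm{prog}(u)\cap\pi(A)\neq\varnothing$; $\sigma(A)$ denotes the set of hubs for $A$. *)

theory Defs
  imports Main
begin

text \<open>Vertices of T_{d,k}: finite words over [d] = {1..d}, represented as nat lists;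
  concatenation u . v is list append.\<close>
definition vert :: "nat \<Rightarrow> nat list set" where
  "vert d = {u. set u \<subseteq> {1..d}}"

definition short_edges :: "nat \<Rightarrow> (nat list \<times> nat list) set" where
  "short_edges d = {(u, u @ [a]) | u a. u \<in> vert d \<and> a \<in> {1..d}}"

definition long_edges :: "nat \<Rightarrow> nat \<Rightarrow> (nat list \<times> nat list) set" where
  "long_edges d k = {(u, u @ r) | u r. u \<in> vert d \<and> r \<in> vert d \<and> length r = k}"

definition edges :: "nat \<Rightarrow> nat \<Rightarrow> (nat list \<times> nat list) set" where
  "edges d k = short_edges d \<union> long_edges d k"

text \<open>A configuration omega in {0,1}^E is a boolean function on edges (True = 1 = open).\<close>

definition prog :: "nat \<Rightarrow> nat list \<Rightarrow> nat list set" where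
  "prog d u = {u @ v | v. v \<in> vert d}"

definition prog_edge :: "nat \<Rightarrow> nat list \<times> nat list \<Rightarrow> nat list set" where
  "prog_edge d e = prog d (snd e)"

definition trace :: "nat list \<Rightarrow> nat list \<Rightarrow> (nat list \<times> nat list) set" where
  "trace u r = {(u @ take i r, u @ take (Suc i) r) | i. i < length r}"

definition Pi_reach :: "nat \<Rightarrow> nat \<Rightarrow> (nat list \<times> nat list \<Rightarrow> bool) \<Rightarrow> nat list set \<Rightarrow> nat list set" where
  "Pi_reach d k \<omega> A = {v. \<exists>u\<in>A. (u, v) \<in> {e \<in> edges d k. \<omega> e}\<^sup>*}"

definition pi_reach :: "nat \<Rightarrow> (nat list \<times> nat list \<Rightarrow> bool) \<Rightarrow> nat list set \<Rightarrow> nat list set" where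
  "pi_reach d \<omega> A = {v. \<exists>u\<in>A. (u, v) \<in> {e \<in> short_edges d. \<omega> e}\<^sup>*}"

definition hubs :: "nat \<Rightarrow> (nat list \<times> nat list \<Rightarrow> bool) \<Rightarrow> nat list set \<Rightarrow> (nat list \<times> nat list) set" where
  "hubs d \<omega> A = {(u, v) | u v. (u, v) \<in> short_edges d \<and>
      prog d v \<inter> pi_reach d \<omega> A = {} \<and> prog d u \<inter> pi_reach d \<omega> A \<noteq> {}}"

end

theory Submission
  imports Defs "HOL-Library.Sublist"
begin

text \<open>Having progeny that meets \<open>\<pi>(A)\<close> is inherited by prefixes, so along any branch of the
  tree it fails from some edge onwards; hubs are exactly these edges, each branch crosses at most
  one, and their progenies are disjoint. If \<open>A\<close> lies within \<open>k\<close> generations of a common ancestor,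
  no point of \<open>A\<close> lies strictly beyond the endpoint of a long edge issued from \<open>\<pi>(A)\<close>, nor beyond
  a point of \<open>\<Pi>(A) - \<pi>(A)\<close>: such a point would be within \<open>k\<close> generations of its ancestor in \<open>A\<close>,
  so no long edge fits on the path reaching it. Hence such branches do cross a hub.\<close>

abbreviation open_edges :: "nat \<Rightarrow> nat \<Rightarrow> (nat list \<times> nat list \<Rightarrow> bool) \<Rightarrow> (nat list \<times> nat list) set"
  where "open_edges d k \<omega> \<equiv> {e \<in> edges d k. \<omega> e}"

abbreviation open_short_edges :: "nat \<Rightarrow> (nat list \<times> nat list \<Rightarrow> bool) \<Rightarrow> (nat list \<times> nat list) set"
  where "open_short_edges d \<omega> \<equiv> {e \<in> short_edges d. \<omega> e}"

lemma append_in_vert_iff [simp]: "xs @ ys \<in> vert d \<longleftrightarrow> xs \<in> vert d \<and> ys \<in> vert d"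
  by (auto simp: vert_def)

lemma Nil_in_vert [simp]: "[] \<in> vert d"
  by (simp add: vert_def)

lemma take_in_vert: "r \<in> vert d \<Longrightarrow> take i r \<in> vert d"
  using append_in_vert_iff[of "take i r" "drop i r"] by simp

lemma drop_in_vert: "r \<in> vert d \<Longrightarrow> drop i r \<in> vert d"
  using append_in_vert_iff[of "take i r" "drop i r"] by simp

lemma nth_in_letters: "r \<in> vert d \<Longrightarrow> i < length r \<Longrightarrow> r ! i \<in> {1..d}"
  unfolding vert_def using nth_mem by blast

lemma prefix_of_mem_prog: "x \<in> prog d u \<Longrightarrow> prefix u x"
  by (auto simp: prog_def)

lemma append_mem_prog: "v \<in> vert d \<Longrightarrow> u @ v \<in> prog d u"
  by (auto simp: prog_def)

lemma self_mem_prog: "u \<in> prog d u"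
  using append_mem_prog[of "[]" d u] by simp

lemma prog_antimono:
  assumes "prefix p q" and "q \<in> vert d"
  shows "prog d q \<subseteq> prog d p"
proof
  fix x assume "x \<in> prog d q"
  then obtain v where v: "v \<in> vert d" "x = q @ v" by (auto simp: prog_def)
  obtain s where s: "q = p @ s" using assms(1) by (auto simp: prefix_def)
  with assms(2) v show "x \<in> prog d p" by (auto intro: append_mem_prog[of "s @ v", simplified])
qed

lemma open_edges_rtrancl_append:
  "(a, x) \<in> (open_edges d k \<omega>)\<^sup>* \<Longrightarrow> \<exists>v\<in>vert d. x = a @ v"
proof (induction rule: rtrancl_induct)
  case base
  show ?case by (intro bexI[of _ "[]"]) auto
next
  case (step y z)
  then obtain v where v: "v \<in> vert d" "y = a @ v" by blast
  from step(2) have "\<exists>r\<in>vert d. z = y @ r"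
    by (auto simp: edges_def short_edges_def long_edges_def vert_def)
  then obtain r where "r \<in> vert d" "z = y @ r" by blast
  with v show ?case by (intro bexI[of _ "v @ r"]) auto
qed

lemma open_short_edges_rtrancl_subset: "(open_short_edges d \<omega>)\<^sup>* \<subseteq> (open_edges d k \<omega>)\<^sup>*"
  by (rule rtrancl_mono) (auto simp: edges_def)

lemma open_short_edges_rtrancl_prefix:
  "(a, x) \<in> (open_short_edges d \<omega>)\<^sup>* \<Longrightarrow> prefix a x"
proof -
  assume "(a, x) \<in> (open_short_edges d \<omega>)\<^sup>*"
  then have "(a, x) \<in> (open_edges d 0 \<omega>)\<^sup>*" using open_short_edges_rtrancl_subset by blast
  then show ?thesis by (auto dest: open_edges_rtrancl_append)
qed

lemma open_short_edges_rtrancl_prefix_closed: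
  "(a, z) \<in> (open_short_edges d \<omega>)\<^sup>* \<Longrightarrow> prefix a y \<Longrightarrow> prefix y z
    \<Longrightarrow> (a, y) \<in> (open_short_edges d \<omega>)\<^sup>*"
proof (induction arbitrary: y rule: rtrancl_induct)
  case base
  then show ?case using prefix_order.antisym by auto
next
  case (step z z')
  from step(2) obtain b where b: "z' = z @ [b]" by (auto simp: short_edges_def)
  with step(5) have "y = z' \<or> prefix y z" by auto
  then show ?case using step by (auto intro: rtrancl_into_rtrancl)
qed

text \<open>A long edge adds \<open>k\<close> letters, so an open path gaining fewer than \<open>k\<close> letters uses none.\<close>

lemma open_edges_rtrancl_short:
  "(a, x) \<in> (open_edges d k \<omega>)\<^sup>* \<Longrightarrow> length x < length a + k
    \<Longrightarrow> (a, x) \<in> (open_short_edges d \<omega>)\<^sup>*"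
proof (induction rule: rtrancl_induct)
  case base
  then show ?case by simp
next
  case (step y z)
  have "length a \<le> length y" using open_edges_rtrancl_append[OF step(1)] by auto
  with step(2,4) have "(y, z) \<in> open_short_edges d \<omega>" and "length z = Suc (length y)"
    by (auto simp: edges_def long_edges_def short_edges_def)
  with step(3,4) show ?case by (auto intro: rtrancl_into_rtrancl)
qed

lemma pi_reach_subset_Pi_reach: "pi_reach d \<omega> A \<subseteq> Pi_reach d k \<omega> A"
  using open_short_edges_rtrancl_subset by (fastforce simp: pi_reach_def Pi_reach_def)

lemma subset_pi_reach: "A \<subseteq> pi_reach d \<omega> A"
  by (auto simp: pi_reach_def)

lemma pi_reach_ancestor: "x \<in> pi_reach d \<omega> A \<Longrightarrow> \<exists>a\<in>A. prefix a x"
  using open_short_edges_rtrancl_prefix by (fastforce simp: pi_reach_def)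

lemma prog_meets_pi_reach_outside:
  assumes "prog d y \<inter> pi_reach d \<omega> A \<noteq> {}" and "y \<notin> pi_reach d \<omega> A"
  shows "\<exists>a\<in>A. strict_prefix y a"
proof -
  obtain z where z: "z \<in> prog d y" "z \<in> pi_reach d \<omega> A" using assms(1) by blast
  then obtain a where a: "a \<in> A" "(a, z) \<in> (open_short_edges d \<omega>)\<^sup>*"
    by (auto simp: pi_reach_def)
  have "prefix a z" "prefix y z"
    using open_short_edges_rtrancl_prefix[OF a(2)] prefix_of_mem_prog[OF z(1)] .
  then have "prefix a y \<or> prefix y a" by (rule prefix_same_cases)
  moreover have "\<not> prefix a y"
    using open_short_edges_rtrancl_prefix_closed[OF a(2) _ \<open>prefix y z\<close>] a(1) assms(2)
    by (auto simp: pi_reach_def)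
  ultimately show ?thesis
    using a(1) assms(2) subset_pi_reach by (auto simp: strict_prefix_def)
qed

lemma hub_not_strictly_below:
  assumes "(u, v) \<in> hubs d \<omega> A" and "(u', v') \<in> hubs d \<omega> A"
  shows "\<not> strict_prefix v v'"
proof
  assume below: "strict_prefix v v'"
  obtain b' where "v' = u' @ [b']" and "u' \<in> vert d"
    using assms(2) by (auto simp: hubs_def short_edges_def)
  with below have "prog d u' \<subseteq> prog d v"
    by (intro prog_antimono) (auto simp: strict_prefix_def)
  then show False using assms by (auto simp: hubs_def)
qed

lemma hubs_prog_disjoint:
  assumes "e \<in> hubs d \<omega> A" and "e' \<in> hubs d \<omega> A" and "e \<noteq> e'"
  shows "prog_edge d e \<inter> prog_edge d e' = {}"
proof (rule ccontr)
  obtain u v u' v' where e: "e = (u, v)" and e': "e' = (u', v')" by fastforce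
  obtain b b' where "v = u @ [b]" and "v' = u' @ [b']"
    using assms(1,2) by (auto simp: e e' hubs_def short_edges_def)
  with assms(3) have "v \<noteq> v'" by (auto simp: e e')
  assume "prog_edge d e \<inter> prog_edge d e' \<noteq> {}"
  then obtain x where "prefix v x" and "prefix v' x"
    by (auto simp: prog_edge_def e e' dest: prefix_of_mem_prog)
  then have "prefix v v' \<or> prefix v' v" by (rule prefix_same_cases)
  with \<open>v \<noteq> v'\<close> show False
    using hub_not_strictly_below[of u v d \<omega> A u' v'] hub_not_strictly_below[of u' v' d \<omega> A u v]
      assms(1,2) unfolding e e' strict_prefix_def by blast
qed

lemma ex_last_true_before_false:
  "P 0 \<Longrightarrow> \<not> P n \<Longrightarrow> \<exists>i<n. P i \<and> \<not> P (Suc i)"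
proof (induction n)
  case (Suc n)
  then show ?case by (cases "P n") (auto intro: less_SucI)
qed simp

lemma hub_on_branch:
  assumes "p \<in> vert d" and "r \<in> vert d"
    and "prog d p \<inter> pi_reach d \<omega> A \<noteq> {}" and "prog d (p @ r) \<inter> pi_reach d \<omega> A = {}"
  shows "\<exists>i<length r. (p @ take i r, p @ take (Suc i) r) \<in> hubs d \<omega> A"
proof -
  let ?meets = "\<lambda>i. prog d (p @ take i r) \<inter> pi_reach d \<omega> A \<noteq> {}"
  obtain i where i: "i < length r" "?meets i" "\<not> ?meets (Suc i)"
    using ex_last_true_before_false[of ?meets "length r"] assms(3,4) by auto
  have "p @ take (Suc i) r = (p @ take i r) @ [r ! i]"
    using i(1) by (simp add: take_Suc_conv_app_nth)
  moreover have "p @ take i r \<in> vert d" "r ! i \<in> {1..d}"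
    using assms(1,2) i(1) take_in_vert nth_in_letters by auto
  ultimately have "(p @ take i r, p @ take (Suc i) r) \<in> short_edges d"
    unfolding short_edges_def by blast
  with i show ?thesis by (auto simp: hubs_def)
qed

lemma hub_on_branch_unique:
  assumes "r \<in> vert d"
    and "(p @ take i r, p @ take (Suc i) r) \<in> hubs d \<omega> A"
    and "(p @ take j r, p @ take (Suc j) r) \<in> hubs d \<omega> A"
  shows "i = j"
proof -
  have False if "i < j" "(p @ take i r, p @ take (Suc i) r) \<in> hubs d \<omega> A"
    "(p @ take j r, p @ take (Suc j) r) \<in> hubs d \<omega> A" for i j
  proof -
    have "prefix (take (Suc i) r) (take j r)"
      using \<open>i < j\<close> take_add[of "Suc i" "j - Suc i" r] by (simp add: prefixI)
    then have "prog d (p @ take j r) \<subseteq> prog d (p @ take (Suc i) r)"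
      using that(3) by (intro prog_antimono) (auto simp: hubs_def short_edges_def)
    then show False using that(2,3) by (auto simp: hubs_def)
  qed
  then show ?thesis using assms(2,3) by (metis linorder_neqE_nat)
qed

lemma trace_hubs_ex1:
  assumes "u \<in> vert d" and "r \<in> vert d"
    and "prog d u \<inter> pi_reach d \<omega> A \<noteq> {}" and "prog d (u @ r) \<inter> pi_reach d \<omega> A = {}"
  shows "\<exists>!e. e \<in> trace u r \<inter> hubs d \<omega> A"
proof -
  obtain i where "i < length r" "(u @ take i r, u @ take (Suc i) r) \<in> hubs d \<omega> A"
    using hub_on_branch[OF assms] by blast
  moreover have "e = (u @ take i r, u @ take (Suc i) r)"
    if "e \<in> trace u r \<inter> hubs d \<omega> A" and "i < length r"
      and "(u @ take i r, u @ take (Suc i) r) \<in> hubs d \<omega> A" for e i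
    using that hub_on_branch_unique[OF assms(2), of u] by (auto simp: trace_def)
  ultimately show ?thesis by (auto simp: trace_def)
qed

definition within_generations :: "nat \<Rightarrow> nat \<Rightarrow> nat list \<Rightarrow> nat list set \<Rightarrow> bool" where
  "within_generations d k w A \<longleftrightarrow> A \<subseteq> {w @ v | v. v \<in> vert d \<and> length v \<le> k}"

lemma within_generations_length_le:
  assumes "within_generations d k w A" and "a \<in> A" and "a' \<in> A"
  shows "length a' \<le> length a + k"
proof -
  obtain v v' where "a = w @ v" and "a' = w @ v'" and "length v' \<le> k"
    using assms unfolding within_generations_def by blast
  then show ?thesis by simp
qed

lemma long_edge_leaving_pi_reach_hubs_ex1:
  assumes "within_generations d k w A"
    and "(u, u @ r) \<in> long_edges d k" and "u \<in> pi_reach d \<omega> A" and "u @ r \<notin> pi_reach d \<omega> A"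
  shows "\<exists>!e. e \<in> trace u r \<inter> hubs d \<omega> A"
proof (rule trace_hubs_ex1)
  show "u \<in> vert d" "r \<in> vert d" using assms(2) by (auto simp: long_edges_def)
  show "prog d u \<inter> pi_reach d \<omega> A \<noteq> {}" using assms(3) self_mem_prog by blast
  show "prog d (u @ r) \<inter> pi_reach d \<omega> A = {}"
  proof (rule ccontr)
    assume "prog d (u @ r) \<inter> pi_reach d \<omega> A \<noteq> {}"
    then obtain a' where "a' \<in> A" "length (u @ r) < length a'"
      using prog_meets_pi_reach_outside assms(4) prefix_length_less by blast
    moreover obtain a where "a \<in> A" "length a \<le> length u"
      using pi_reach_ancestor[OF assms(3)] prefix_length_le by blast
    ultimately show False
      using within_generations_length_le[OF assms(1)] assms(2) by (fastforce simp: long_edges_def)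
  qed
qed

lemma Pi_reach_decomposition:
  assumes "within_generations d k w A" and "A \<subseteq> vert d"
  shows "Pi_reach d k \<omega> A = pi_reach d \<omega> A \<union> (\<Union>e\<in>hubs d \<omega> A. Pi_reach d k \<omega> A \<inter> prog_edge d e)"
proof
  show "Pi_reach d k \<omega> A \<subseteq> pi_reach d \<omega> A \<union> (\<Union>e\<in>hubs d \<omega> A. Pi_reach d k \<omega> A \<inter> prog_edge d e)"
  proof
    fix x assume x: "x \<in> Pi_reach d k \<omega> A"
    show "x \<in> pi_reach d \<omega> A \<union> (\<Union>e\<in>hubs d \<omega> A. Pi_reach d k \<omega> A \<inter> prog_edge d e)"
    proof (cases "x \<in> pi_reach d \<omega> A")
      case False
      obtain a where a: "a \<in> A" "(a, x) \<in> (open_edges d k \<omega>)\<^sup>*"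
        using x by (auto simp: Pi_reach_def)
      obtain t where t: "t \<in> vert d" "x = a @ t" using open_edges_rtrancl_append[OF a(2)] by blast
      have "prog d x \<inter> pi_reach d \<omega> A = {}"
      proof (rule ccontr)
        assume "prog d x \<inter> pi_reach d \<omega> A \<noteq> {}"
        then obtain a' where "a' \<in> A" "length x < length a'"
          using prog_meets_pi_reach_outside False prefix_length_less by blast
        then have "length x < length a + k"
          using within_generations_length_le[OF assms(1) a(1) \<open>a' \<in> A\<close>] by linarith
        then show False
          using open_edges_rtrancl_short[OF a(2)] a(1) False by (auto simp: pi_reach_def)
      qed
      moreover have "prog d a \<inter> pi_reach d \<omega> A \<noteq> {}"
        using a(1) self_mem_prog subset_pi_reach by blast
      moreover have "a \<in> vert d" using a(1) assms(2) by blast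
      ultimately obtain i where i: "(a @ take i t, a @ take (Suc i) t) \<in> hubs d \<omega> A"
        using hub_on_branch[of a d t] t by blast
      have "x \<in> prog_edge d (a @ take i t, a @ take (Suc i) t)"
        using append_mem_prog[OF drop_in_vert[OF t(1)], of "a @ take (Suc i) t" "Suc i"] t(2)
        by (simp add: prog_edge_def)
      with i x show ?thesis by blast
    qed simp
  qed
  show "pi_reach d \<omega> A \<union> (\<Union>e\<in>hubs d \<omega> A. Pi_reach d k \<omega> A \<inter> prog_edge d e) \<subseteq> Pi_reach d k \<omega> A"
    using pi_reach_subset_Pi_reach by blast
qed

lemma pi_reach_disjoint_hub_prog:
  "e \<in> hubs d \<omega> A \<Longrightarrow> pi_reach d \<omega> A \<inter> prog_edge d e = {}"
  by (auto simp: hubs_def prog_edge_def)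

theorem lemma5:
  fixes d k :: nat and \<omega> :: "nat list \<times> nat list \<Rightarrow> bool" and A :: "nat list set"
  assumes "d \<ge> 2" and "k \<ge> 1" and "A \<subseteq> vert d"
  shows "(\<forall>e\<in>hubs d \<omega> A. \<forall>e'\<in>hubs d \<omega> A. e \<noteq> e' \<longrightarrow> prog_edge d e \<inter> prog_edge d e' = {})
    \<and> ((\<exists>w\<in>vert d. A \<subseteq> {w @ v | v. v \<in> vert d \<and> length v \<le> k}) \<longrightarrow>
        (\<forall>u r. (u, u @ r) \<in> long_edges d k \<and> length r = k \<and>
               u \<in> pi_reach d \<omega> A \<and> u @ r \<notin> pi_reach d \<omega> A \<longrightarrow>
               (\<exists>!e'. e' \<in> trace u r \<inter> hubs d \<omega> A))
      \<and> Pi_reach d k \<omega> A = pi_reach d \<omega> A \<union> (\<Union>e\<in>hubs d \<omega> A. Pi_reach d k \<omega> A \<inter> prog_edge d e)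
      \<and> (\<forall>e\<in>hubs d \<omega> A. pi_reach d \<omega> A \<inter> (Pi_reach d k \<omega> A \<inter> prog_edge d e) = {}))"
proof (intro conjI impI ballI allI)
  show "prog_edge d e \<inter> prog_edge d e' = {}"
    if "e \<in> hubs d \<omega> A" "e' \<in> hubs d \<omega> A" "e \<noteq> e'" for e e'
    using hubs_prog_disjoint that .
  show "pi_reach d \<omega> A \<inter> (Pi_reach d k \<omega> A \<inter> prog_edge d e) = {}" if "e \<in> hubs d \<omega> A" for e
    using pi_reach_disjoint_hub_prog[OF that] by blast
  assume "\<exists>w\<in>vert d. A \<subseteq> {w @ v | v. v \<in> vert d \<and> length v \<le> k}"
  then obtain w where w: "within_generations d k w A" by (auto simp: within_generations_def)
  show "\<exists>!e'. e' \<in> trace u r \<inter> hubs d \<omega> A"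
    if "(u, u @ r) \<in> long_edges d k \<and> length r = k \<and> u \<in> pi_reach d \<omega> A \<and> u @ r \<notin> pi_reach d \<omega> A"
    for u r
    using that long_edge_leaving_pi_reach_hubs_ex1[OF w] by blast
  show "Pi_reach d k \<omega> A = pi_reach d \<omega> A \<union> (\<Union>e\<in>hubs d \<omega> A. Pi_reach d k \<omega> A \<inter> prog_edge d e)"
    using Pi_reach_decomposition[OF w assms(3)] .
qed

end
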